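(* Let $\Gamma$ be a geometry of type $C_3$. Then every closed path of $\Gamma$ based at a point is homotopic to a primitive path.
   Context: A geometry of type $C_3$ is a (residually connected) rank-3 Tits geometry belonging to the diagram $\circ\!-\!\circ\!=\!\circ$, with types $1,2,3$ called points, lines and planes respectively (residue of a plane: a projective plane on its points and lines; residue of a point: a generalized quadrangle on its lines and planes; residue of a line: a generalized digon). Paths and homotopy: a path is a sequence of elements with consecutive elements incident; homotopy $\sim$ is the equivalence relation on paths with fixed endpoints generated by $(x,y,x)\leftrightarrow(x)$ and $(x,y,z)\leftrightarrow(x,z)$ for flags $\{x,y,z\}$ (homotopy in the flag complex). A primitive path is a closed path $(p,L,q,M,p)$ with $p,q$ points and $L,M$ lines; it is degenerate if $p=q$ or $L=M$. *)

theory Defs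
  imports Main
begin

text \<open>A rank-3 incidence geometry is given by a set of elements X, a type function
  t (types 1 = points, 2 = lines, 3 = planes) and a symmetric, reflexive incidence
  relation I on X such that distinct elements of the same type are never incident.\<close>

definition incidence_geometry3 :: "'a set \<Rightarrow> ('a \<Rightarrow> nat) \<Rightarrow> ('a \<Rightarrow> 'a \<Rightarrow> bool) \<Rightarrow> bool" where
  "incidence_geometry3 X t I \<longleftrightarrow>
     (\<forall>x\<in>X. t x \<in> {1,2,3}) \<and>
     (\<forall>x y. I x y \<longrightarrow> x \<in> X \<and> y \<in> X) \<and>
     (\<forall>x\<in>X. I x x) \<and>
     (\<forall>x y. I x y \<longrightarrow> I y x) \<and>
     (\<forall>x y. I x y \<and> t x = t y \<longrightarrow> x = y)"

definition is_flag :: "'a set \<Rightarrow> ('a \<Rightarrow> 'a \<Rightarrow> bool) \<Rightarrow> 'a set \<Rightarrow> bool" where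
  "is_flag X I F \<longleftrightarrow> F \<subseteq> X \<and> (\<forall>x\<in>F. \<forall>y\<in>F. I x y)"

definition residue :: "'a set \<Rightarrow> ('a \<Rightarrow> 'a \<Rightarrow> bool) \<Rightarrow> 'a set \<Rightarrow> 'a set" where
  "residue X I F = {y \<in> X - F. \<forall>x\<in>F. I x y}"

definition connected_in :: "('a \<Rightarrow> 'a \<Rightarrow> bool) \<Rightarrow> 'a set \<Rightarrow> bool" where
  "connected_in I S \<longleftrightarrow>
     (\<forall>x\<in>S. \<forall>y\<in>S. (\<lambda>a b. a \<in> S \<and> b \<in> S \<and> I a b)\<^sup>*\<^sup>* x y)"

text \<open>Residual connectedness for rank 3: the residue of every flag of corank \<open>\<ge> 2\<close>
  (i.e. of the empty flag and of every single element) is nonempty and connected,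
  and the residue of every flag of corank 1 is nonempty.\<close>
definition residually_connected3 :: "'a set \<Rightarrow> ('a \<Rightarrow> nat) \<Rightarrow> ('a \<Rightarrow> 'a \<Rightarrow> bool) \<Rightarrow> bool" where
  "residually_connected3 X t I \<longleftrightarrow>
     (\<forall>F. is_flag X I F \<and> card (t ` F) \<le> 1 \<longrightarrow>
          residue X I F \<noteq> {} \<and> connected_in I (residue X I F)) \<and>
     (\<forall>F. is_flag X I F \<and> card (t ` F) = 2 \<longrightarrow> residue X I F \<noteq> {})"

definition projective_plane :: "'a set \<Rightarrow> 'a set \<Rightarrow> ('a \<Rightarrow> 'a \<Rightarrow> bool) \<Rightarrow> bool" where
  "projective_plane P L I \<longleftrightarrow>
     (\<forall>p\<in>P. \<forall>q\<in>P. p \<noteq> q \<longrightarrow> (\<exists>!l. l \<in> L \<and> I p l \<and> I q l)) \<and>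
     (\<forall>l\<in>L. \<forall>m\<in>L. l \<noteq> m \<longrightarrow> (\<exists>!p. p \<in> P \<and> I p l \<and> I p m)) \<and>
     (\<exists>a\<in>P. \<exists>b\<in>P. \<exists>c\<in>P. \<exists>d\<in>P. distinct [a,b,c,d] \<and>
        (\<forall>x\<in>{a,b,c,d}. \<forall>y\<in>{a,b,c,d}. \<forall>z\<in>{a,b,c,d}.
            distinct [x,y,z] \<longrightarrow> \<not> (\<exists>l\<in>L. I x l \<and> I y l \<and> I z l)))"

text \<open>Generalized quadrangle on points P and lines L: every line has at least two
  points, every point is on at least two lines, two distinct points are on at most
  one common line, and for every non-incident point-line pair (x,l) there is exactly
  one point on l collinear with x.  (Equivalently: the incidence graph has diameter 4
  and girth 8, and is firm.)\<close>
definition generalized_quadrangle :: "'a set \<Rightarrow> 'a set \<Rightarrow> ('a \<Rightarrow> 'a \<Rightarrow> bool) \<Rightarrow> bool" where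
  "generalized_quadrangle P L I \<longleftrightarrow>
     (\<forall>l\<in>L. \<exists>p\<in>P. \<exists>q\<in>P. p \<noteq> q \<and> I p l \<and> I q l) \<and>
     (\<forall>p\<in>P. \<exists>l\<in>L. \<exists>m\<in>L. l \<noteq> m \<and> I p l \<and> I p m) \<and>
     (\<forall>p\<in>P. \<forall>q\<in>P. \<forall>l\<in>L. \<forall>m\<in>L.
        p \<noteq> q \<and> I p l \<and> I q l \<and> I p m \<and> I q m \<longrightarrow> l = m) \<and>
     (\<forall>x\<in>P. \<forall>l\<in>L. \<not> I x l \<longrightarrow>
        (\<exists>!y. y \<in> P \<and> I y l \<and> (\<exists>m\<in>L. I x m \<and> I y m)))"

definition generalized_digon :: "'a set \<Rightarrow> 'a set \<Rightarrow> ('a \<Rightarrow> 'a \<Rightarrow> bool) \<Rightarrow> bool" where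
  "generalized_digon P L I \<longleftrightarrow> (\<forall>p\<in>P. \<forall>l\<in>L. I p l)"

definition elems_of_type :: "'a set \<Rightarrow> ('a \<Rightarrow> nat) \<Rightarrow> nat \<Rightarrow> 'a set" where
  "elems_of_type S t i = {x \<in> S. t x = i}"

definition C3_geometry :: "'a set \<Rightarrow> ('a \<Rightarrow> nat) \<Rightarrow> ('a \<Rightarrow> 'a \<Rightarrow> bool) \<Rightarrow> bool" where
  "C3_geometry X t I \<longleftrightarrow>
     incidence_geometry3 X t I \<and> residually_connected3 X t I \<and>
     (\<forall>x\<in>X. t x = 3 \<longrightarrow>
        projective_plane (elems_of_type (residue X I {x}) t 1)
                         (elems_of_type (residue X I {x}) t 2) I) \<and>
     (\<forall>x\<in>X. t x = 1 \<longrightarrow>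
        generalized_quadrangle (elems_of_type (residue X I {x}) t 2)
                               (elems_of_type (residue X I {x}) t 3) I) \<and>
     (\<forall>x\<in>X. t x = 2 \<longrightarrow>
        generalized_digon (elems_of_type (residue X I {x}) t 1)
                          (elems_of_type (residue X I {x}) t 3) I)"

definition is_path :: "'a set \<Rightarrow> ('a \<Rightarrow> 'a \<Rightarrow> bool) \<Rightarrow> 'a list \<Rightarrow> bool" where
  "is_path X I p \<longleftrightarrow> p \<noteq> [] \<and> set p \<subseteq> X \<and>
     (\<forall>i. Suc i < length p \<longrightarrow> I (p ! i) (p ! Suc i))"

definition elem_move :: "'a set \<Rightarrow> ('a \<Rightarrow> 'a \<Rightarrow> bool) \<Rightarrow> 'a list \<Rightarrow> 'a list \<Rightarrow> bool" where
  "elem_move X I p q \<longleftrightarrow> is_path X I p \<and> is_path X I q \<and>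
     (\<exists>as bs x y z.
        (p = as @ [x, y, x] @ bs \<and> q = as @ [x] @ bs) \<or>
        (p = as @ [x, y, z] @ bs \<and> q = as @ [x, z] @ bs \<and> is_flag X I {x, y, z}))"

definition homotopic :: "'a set \<Rightarrow> ('a \<Rightarrow> 'a \<Rightarrow> bool) \<Rightarrow> 'a list \<Rightarrow> 'a list \<Rightarrow> bool" where
  "homotopic X I p q \<longleftrightarrow> is_path X I p \<and> (symclp (elem_move X I))\<^sup>*\<^sup>* p q"

definition closed_path :: "'a set \<Rightarrow> ('a \<Rightarrow> 'a \<Rightarrow> bool) \<Rightarrow> 'a list \<Rightarrow> bool" where
  "closed_path X I p \<longleftrightarrow> is_path X I p \<and> hd p = last p"

text \<open>Primitive path (p,L,q,M,p) with p,q points and L,M lines (possibly degenerate).\<close>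
definition primitive_path :: "'a set \<Rightarrow> ('a \<Rightarrow> nat) \<Rightarrow> ('a \<Rightarrow> 'a \<Rightarrow> bool) \<Rightarrow> 'a list \<Rightarrow> bool" where
  "primitive_path X t I c \<longleftrightarrow> is_path X I c \<and>
     (\<exists>p l q m. c = [p, l, q, m, p] \<and> t p = 1 \<and> t q = 1 \<and> t l = 2 \<and> t m = 2)"

end

theory Submission
  imports Defs
begin

text \<open>Any two paths with the same ends inside the residue of one element are homotopic.  Hence,
  after inserting between consecutive elements a point incident with both and replacing each
  plane between two points by a line of that plane through them, a path between points becomes an
  alternating point--line path.  Using the generalized quadrangles in the point residues, three
  consecutive lines of such a path can always be traded for two, so a closed one reduces to at
  most two lines, i.e. to a primitive path.\<close>

lemma successively_iff_nth:
  "successively R xs \<longleftrightarrow> (\<forall>i. Suc i < length xs \<longrightarrow> R (xs ! i) (xs ! Suc i))"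
proof (induction R xs rule: successively.induct)
  case (3 R x y xs)
  show ?case
    unfolding successively.simps 3 by (auto simp: nth_Cons' less_Suc_eq_0_disj)
qed auto

lemma is_path_iff: "is_path X I p \<longleftrightarrow> p \<noteq> [] \<and> set p \<subseteq> X \<and> successively I p"
  by (simp add: is_path_def successively_iff_nth)

lemma is_path_join:
  assumes "is_path X I P" "is_path X I Q" "last P = hd Q"
  shows "is_path X I (P @ tl Q)"
proof -
  obtain q qs where "Q = q # qs" using assms(2) by (cases Q) (auto simp: is_path_iff)
  then show ?thesis
    using assms by (auto simp: is_path_iff successively_append_iff successively_Cons)
qed

lemma is_path_replace:
  assumes "is_path X I (A @ p @ B)" "is_path X I q" "hd q = hd p" "last q = last p" "p \<noteq> []"
  shows "is_path X I (A @ q @ B)"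
  using assms by (auto simp: is_path_iff successively_append_iff)

lemma elem_move_ends:
  "elem_move X I p q \<Longrightarrow> is_path X I p \<and> is_path X I q \<and> hd p = hd q \<and> last p = last q"
  unfolding elem_move_def by (auto simp: hd_append last_append)

lemma homotopic_if_elem_move: "elem_move X I p q \<Longrightarrow> homotopic X I p q"
  unfolding homotopic_def using elem_move_ends by (blast intro: symclpI)

lemma homotopic_ends:
  assumes "homotopic X I p q"
  shows "is_path X I p \<and> is_path X I q \<and> hd p = hd q \<and> last p = last q"
proof -
  have "(symclp (elem_move X I))\<^sup>*\<^sup>* p q" and "is_path X I p"
    using assms by (auto simp: homotopic_def)
  then show ?thesis
    by (induction rule: rtranclp_induct) (auto simp: symclp_def dest: elem_move_ends)
qed

lemma homotopic_refl: "is_path X I p \<Longrightarrow> homotopic X I p p"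
  by (simp add: homotopic_def)

lemma homotopic_trans [trans]: "homotopic X I p q \<Longrightarrow> homotopic X I q r \<Longrightarrow> homotopic X I p r"
  unfolding homotopic_def by auto

lemma homotopic_sym: "homotopic X I p q \<Longrightarrow> homotopic X I q p"
  using homotopic_ends[of X I p q] unfolding homotopic_def
  by (meson symp_rtranclp_symclp sympD)

lemma elem_move_cong:
  "elem_move X I p q \<Longrightarrow> is_path X I (A @ p @ B) \<Longrightarrow> is_path X I (A @ q @ B) \<Longrightarrow>
   elem_move X I (A @ p @ B) (A @ q @ B)"
  unfolding elem_move_def by (metis append.assoc)

lemma homotopic_cong:
  assumes "homotopic X I p q" "is_path X I (A @ p @ B)"
  shows "homotopic X I (A @ p @ B) (A @ q @ B)"
proof -
  have "(symclp (elem_move X I))\<^sup>*\<^sup>* p q" using assms(1) by (simp add: homotopic_def)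
  then have "(symclp (elem_move X I))\<^sup>*\<^sup>* (A @ p @ B) (A @ q @ B)"
  proof (induction rule: rtranclp_induct)
    case (step y z)
    have "homotopic X I p y" "homotopic X I p z"
      using assms(1) step(1,2) by (auto simp: homotopic_def)
    then have "is_path X I (A @ y @ B)" "is_path X I (A @ z @ B)"
      using is_path_replace[OF assms(2)] homotopic_ends by (metis is_path_def)+
    then have "symclp (elem_move X I) (A @ y @ B) (A @ z @ B)"
      using step(2) by (auto simp: symclp_def intro: elem_move_cong)
    with step(3) show ?case by simp
  qed simp
  with assms(2) show ?thesis by (simp add: homotopic_def)
qed

lemma homotopic_join:
  assumes "homotopic X I P P'" "homotopic X I Q Q'" "last P = hd Q"
  shows "homotopic X I (P @ tl Q) (P' @ tl Q')"
proof -
  have ends: "is_path X I P" "is_path X I Q" "hd Q' = hd Q" "last P' = last P" "hd P' = hd P"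
    using homotopic_ends assms(1,2) by metis+
  then have "P \<noteq> []" "Q \<noteq> []" "Q' \<noteq> []"
    using homotopic_ends assms(2) by (auto simp: is_path_def)
  then have split: "P @ tl Q = butlast P @ Q @ []" "P @ tl Q' = butlast P @ Q' @ []"
    using assms(3) ends(3) by (metis append_butlast_last_id append_Cons append_assoc
        list.collapse append_Nil append_Nil2)+
  have "homotopic X I (P @ tl Q) (P @ tl Q')"
    using homotopic_cong[OF assms(2), of "butlast P" "[]"] is_path_join[OF ends(1,2) assms(3)] split
    by simp
  also have "homotopic X I (P @ tl Q') (P' @ tl Q')"
    using homotopic_cong[OF assms(1), of "[]" "tl Q'"] homotopic_ends calculation by fastforce
  finally show ?thesis .
qed

locale rank3_geometry =
  fixes X :: "'a set" and t :: "'a \<Rightarrow> nat" and I :: "'a \<Rightarrow> 'a \<Rightarrow> bool"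
  assumes geometry: "incidence_geometry3 X t I"
begin

lemma incident_in_X: "I x y \<Longrightarrow> x \<in> X \<and> y \<in> X"
  using geometry by (simp add: incidence_geometry3_def)

lemma incident_refl: "x \<in> X \<Longrightarrow> I x x"
  using geometry by (simp add: incidence_geometry3_def)

lemma incident_sym: "I x y \<Longrightarrow> I y x"
  using geometry by (simp add: incidence_geometry3_def)

lemma incident_commute: "I x y \<longleftrightarrow> I y x"
  using incident_sym by blast

lemma incident_same_type: "I x y \<Longrightarrow> t x = t y \<Longrightarrow> x = y"
  using geometry by (simp add: incidence_geometry3_def)

lemma type_cases: "x \<in> X \<Longrightarrow> t x \<in> {1, 2, 3}"
  using geometry by (simp add: incidence_geometry3_def)

lemma is_path_Cons_Cons [simp]: "is_path X I (x # y # zs) \<longleftrightarrow> I x y \<and> is_path X I (y # zs)"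
  using incident_in_X by (auto simp: is_path_iff)

lemma is_path_singleton [simp]: "is_path X I [x] \<longleftrightarrow> x \<in> X"
  by (simp add: is_path_iff)

lemma homotopic_backtrack: "I x y \<Longrightarrow> homotopic X I [x, y, x] [x]"
  by (rule homotopic_if_elem_move)
    (auto simp: elem_move_def incident_sym dest: incident_in_X intro!: exI[of _ "[]"])

lemma homotopic_flag:
  assumes "I x y" "I y z" "I x z"
  shows "homotopic X I [x, y, z] [x, z]"
proof (rule homotopic_if_elem_move)
  have "is_flag X I {x, y, z}"
    using assms incident_in_X incident_sym incident_refl by (auto simp: is_flag_def)
  then show "elem_move X I [x, y, z] [x, z]"
    using assms incident_in_X by (auto simp: elem_move_def intro!: exI[of _ "[]"])
qed

lemma homotopic_stutter: "x \<in> X \<Longrightarrow> homotopic X I [x, x] [x]"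
  by (metis homotopic_backtrack homotopic_flag homotopic_sym homotopic_trans incident_refl)

lemma homotopic_cone:
  "is_path X I P \<Longrightarrow> \<forall>y\<in>set P. I e y \<Longrightarrow> homotopic X I P [hd P, e, last P]"
proof (induction P rule: induct_list012)
  case (2 x)
  then show ?case using homotopic_backtrack homotopic_sym incident_sym by fastforce
next
  case (3 x y zs)
  then have IH: "homotopic X I (y # zs) [y, e, last (y # zs)]" by simp
  have "homotopic X I (x # y # zs) [x, y, e, last (y # zs)]"
    using homotopic_cong[OF IH, of "[x]" "[]"] 3(3) by simp
  also have "homotopic X I [x, y, e, last (y # zs)] [x, e, last (y # zs)]"
    using homotopic_cong[OF homotopic_flag[of x y e], of "[]" "[last (y # zs)]"] 3(3,4)
      homotopic_ends[OF calculation] by (simp add: incident_sym)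
  finally show ?case by simp
qed (simp add: is_path_iff)

lemma cone_paths_homotopic:
  "is_path X I P \<Longrightarrow> is_path X I Q \<Longrightarrow> \<forall>y\<in>set P. I e y \<Longrightarrow> \<forall>y\<in>set Q. I e y \<Longrightarrow>
   hd P = hd Q \<Longrightarrow> last P = last Q \<Longrightarrow> homotopic X I P Q"
  by (metis homotopic_cone homotopic_sym homotopic_trans)

lemma homotopic_double_backtrack: "I p L \<Longrightarrow> homotopic X I [p] [p, L, p, L, p]"
proof -
  assume pL: "I p L"
  have "is_path X I ([p, L] @ [p, L, p] @ [])"
    using pL incident_in_X[OF pL] by (simp add: incident_commute)
  then have "homotopic X I ([p, L] @ [p, L, p] @ []) ([p, L] @ [p] @ [])"
    by (rule homotopic_cong[OF homotopic_backtrack[OF pL]])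
  then have "homotopic X I [p, L, p, L, p] [p]"
    using homotopic_backtrack[OF pL] homotopic_trans by simp
  then show ?thesis by (rule homotopic_sym)
qed

end

fun alternating :: "('a \<Rightarrow> nat) \<Rightarrow> 'a list \<Rightarrow> bool" where
  "alternating t [] = False"
| "alternating t [p] = (t p = 1)"
| "alternating t (p # L # rest) = (t p = 1 \<and> t L = 2 \<and> alternating t rest)"

lemma alternating_join: "alternating t P \<Longrightarrow> alternating t Q \<Longrightarrow> alternating t (P @ tl Q)"
proof (induction t P rule: alternating.induct)
  case (2 t p)
  then obtain q qs where "Q = q # qs" by (cases Q) auto
  with 2 show ?case by (cases qs) auto
qed auto

lemma alternating_le5_cases:
  assumes "alternating t R" "length R \<le> 5"
  obtains p where "R = [p]" "t p = 1"
  | p L q where "R = [p, L, q]" "t p = 1" "t L = 2" "t q = 1"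
  | p L q M s where "R = [p, L, q, M, s]" "t p = 1" "t L = 2" "t q = 1" "t M = 2" "t s = 1"
  using assms by (auto simp: numeral_eq_Suc le_Suc_eq length_Suc_conv)

locale C3 =
  fixes X :: "'a set" and t :: "'a \<Rightarrow> nat" and I :: "'a \<Rightarrow> 'a \<Rightarrow> bool"
  assumes C3: "C3_geometry X t I"

sublocale C3 \<subseteq> rank3_geometry
  using C3 by unfold_locales (simp add: C3_geometry_def)

context C3
begin

lemma exists_incident_other_type: "x \<in> X \<Longrightarrow> \<exists>y. I x y \<and> t y \<noteq> t x"
proof -
  assume "x \<in> X"
  then have "is_flag X I {x}" by (simp add: is_flag_def incident_refl)
  then have "residue X I {x} \<noteq> {}"
    using C3 by (simp add: C3_geometry_def residually_connected3_def)
  then obtain y where "I x y" "y \<noteq> x" by (auto simp: residue_def)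
  then show ?thesis using incident_same_type by metis
qed

lemma exists_incident_third_type:
  "I x y \<Longrightarrow> t x \<noteq> t y \<Longrightarrow> \<exists>z. I x z \<and> I y z \<and> t z \<noteq> t x \<and> t z \<noteq> t y"
proof -
  assume xy: "I x y" "t x \<noteq> t y"
  then have "is_flag X I {x, y}" "card (t ` {x, y}) = 2"
    by (auto simp: is_flag_def incident_refl incident_sym dest: incident_in_X)
  then have "residue X I {x, y} \<noteq> {}"
    using C3 by (simp add: C3_geometry_def residually_connected3_def)
  then obtain z where "I x z" "I y z" "z \<noteq> x" "z \<noteq> y" by (auto simp: residue_def)
  then show ?thesis using incident_same_type by metis
qed

lemma exists_incident_of_type:
  assumes xy: "I x y" and i: "i \<in> {1, 2, 3}"
  shows "\<exists>z. t z = i \<and> I x z \<and> I y z"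
proof -
  have flag: "\<exists>z. t z = i \<and> I u z \<and> I v z" if uv: "I u v" "t u \<noteq> t v" for u v
  proof (cases "i = t u \<or> i = t v")
    case True
    then show ?thesis
      using uv incident_in_X incident_refl incident_sym by metis
  next
    case False
    obtain z where z: "I u z" "I v z" "t z \<noteq> t u" "t z \<noteq> t v"
      using exists_incident_third_type uv by blast
    have "t u \<in> {1, 2, 3}" "t v \<in> {1, 2, 3}" "t z \<in> {1, 2, 3}"
      using uv(1) z(1) type_cases incident_in_X by blast+
    then have "t z = i" using False i uv(2) z(3,4) by auto
    with z show ?thesis by blast
  qed
  show ?thesis
  proof (cases "t x = t y")
    case True
    then have "y = x" using xy incident_same_type by metis
    obtain w where "I x w" "t w \<noteq> t x"
      using exists_incident_other_type xy incident_in_X by blast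
    then show ?thesis
      using flag[of x w] \<open>y = x\<close> xy incident_in_X incident_refl by auto
  next
    case False
    then show ?thesis using flag[of x y] xy incident_in_X incident_refl by auto
  qed
qed

lemma point_line_plane_incident:
  assumes "t p = 1" "t L = 2" "t \<pi> = 3" "I p L" "I L \<pi>"
  shows "I p \<pi>"
proof -
  have "generalized_digon (elems_of_type (residue X I {L}) t 1)
      (elems_of_type (residue X I {L}) t 3) I"
    using C3 assms incident_in_X by (simp add: C3_geometry_def)
  moreover have "p \<in> elems_of_type (residue X I {L}) t 1" "\<pi> \<in> elems_of_type (residue X I {L}) t 3"
    using assms incident_in_X incident_sym by (auto simp: elems_of_type_def residue_def)
  ultimately show ?thesis by (simp add: generalized_digon_def)
qed

lemma plane_residue_projective:
  "t \<pi> = 3 \<Longrightarrow> \<pi> \<in> X \<Longrightarrow>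
   projective_plane (elems_of_type (residue X I {\<pi>}) t 1) (elems_of_type (residue X I {\<pi>}) t 2) I"
  using C3 by (simp add: C3_geometry_def)

lemma plane_line_through_points:
  assumes "t \<pi> = 3" "t p = 1" "t q = 1" "I p \<pi>" "I q \<pi>" "p \<noteq> q"
  shows "\<exists>M. t M = 2 \<and> I M \<pi> \<and> I p M \<and> I q M"
proof -
  have "p \<in> elems_of_type (residue X I {\<pi>}) t 1" "q \<in> elems_of_type (residue X I {\<pi>}) t 1"
    using assms incident_in_X incident_sym by (auto simp: elems_of_type_def residue_def)
  with plane_residue_projective assms obtain M
    where "M \<in> elems_of_type (residue X I {\<pi>}) t 2" "I p M" "I q M"
    unfolding projective_plane_def by (meson incident_in_X)
  then show ?thesis by (auto simp: elems_of_type_def residue_def intro: incident_sym)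
qed

lemma plane_lines_meet:
  assumes "t \<pi> = 3" "t L = 2" "t M = 2" "I L \<pi>" "I M \<pi>" "L \<noteq> M"
  shows "\<exists>p. t p = 1 \<and> I p \<pi> \<and> I p L \<and> I p M"
proof -
  have "L \<in> elems_of_type (residue X I {\<pi>}) t 2" "M \<in> elems_of_type (residue X I {\<pi>}) t 2"
    using assms incident_in_X incident_sym by (auto simp: elems_of_type_def residue_def)
  with plane_residue_projective assms obtain p
    where "p \<in> elems_of_type (residue X I {\<pi>}) t 1" "I p L" "I p M"
    unfolding projective_plane_def by (meson incident_in_X)
  then show ?thesis by (auto simp: elems_of_type_def residue_def intro: incident_sym)
qed

text \<open>In the quadrangle residue of \<open>b\<close>, the line \<open>L\<close> is collinear with some point of the line
  \<open>\<pi>\<close>; read in \<open>\<Gamma>\<close> this is a line \<open>K\<close> of \<open>\<pi>\<close> through \<open>b\<close> spanning a plane with \<open>L\<close>.\<close>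
lemma quadrangle_coplanar_line:
  assumes "t b = 1" "t L = 2" "t \<pi> = 3" "I b L" "I b \<pi>"
  shows "\<exists>K \<sigma>. t K = 2 \<and> I b K \<and> I K \<pi> \<and> t \<sigma> = 3 \<and> I L \<sigma> \<and> I K \<sigma>"
proof (cases "I L \<pi>")
  case False
  have "generalized_quadrangle (elems_of_type (residue X I {b}) t 2)
      (elems_of_type (residue X I {b}) t 3) I"
    using C3 assms incident_in_X by (simp add: C3_geometry_def)
  moreover have "L \<in> elems_of_type (residue X I {b}) t 2" "\<pi> \<in> elems_of_type (residue X I {b}) t 3"
    using assms incident_in_X by (auto simp: elems_of_type_def residue_def)
  ultimately obtain K where "K \<in> elems_of_type (residue X I {b}) t 2" "I K \<pi>"
      "\<exists>\<sigma>\<in>elems_of_type (residue X I {b}) t 3. I L \<sigma> \<and> I K \<sigma>"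
    using False unfolding generalized_quadrangle_def by metis
  then show ?thesis by (auto simp: elems_of_type_def residue_def)
qed (use assms in blast)

lemma plane_path_reduces:
  assumes P: "is_path X I P" and \<sigma>: "t \<sigma> = 3" "\<forall>y\<in>set P. I \<sigma> y"
    and ends: "t (hd P) = 1" "t (last P) = 1"
  shows "\<exists>R. alternating t R \<and> length R \<le> 3 \<and> homotopic X I P R"
proof -
  have "P \<noteq> []" using P by (simp add: is_path_iff)
  then have on_\<sigma>: "I \<sigma> (hd P)" "I \<sigma> (last P)" using \<sigma>(2) by auto
  show ?thesis
  proof (cases "hd P = last P")
    case True
    have "homotopic X I P [hd P]"
      using cone_paths_homotopic[OF P] \<sigma>(2) on_\<sigma> True incident_in_X by auto
    then show ?thesis using ends(1) by (intro exI[of _ "[hd P]"]) simp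
  next
    case False
    obtain M where M: "t M = 2" "I M \<sigma>" "I (hd P) M" "I (last P) M"
      using plane_line_through_points[OF \<sigma>(1) ends] on_\<sigma> False incident_commute by metis
    have "homotopic X I P [hd P, M, last P]"
      using cone_paths_homotopic[OF P] \<sigma>(2) on_\<sigma> M incident_in_X by (auto simp: incident_commute)
    then show ?thesis using ends M(1) by (intro exI[of _ "[hd P, M, last P]"]) simp
  qed
qed

lemma three_element_path_alternating:
  assumes "I x y" "I y r" "t x = 1" "t r = 1"
  shows "\<exists>Q. alternating t Q \<and> homotopic X I [x, y, r] Q"
proof -
  have path: "is_path X I [x, y, r]" using assms incident_in_X by simp
  have "t y \<in> {1, 2, 3}" using assms type_cases incident_in_X by blast
  then consider "t y = 1" | "t y = 2" | "t y = 3" by blast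
  then show ?thesis
  proof cases
    case 1
    then have "y = x" "r = x" using assms incident_same_type by metis+
    then show ?thesis using homotopic_backtrack[of x x] assms by (intro exI[of _ "[x]"]) simp
  next
    case 2
    then show ?thesis using homotopic_refl[OF path] assms by (intro exI[of _ "[x, y, r]"]) simp
  next
    case 3
    then show ?thesis
      using plane_path_reduces[OF path 3] assms incident_in_X incident_refl
      by (auto simp: incident_commute)
  qed
qed

lemma homotopic_alternating:
  "is_path X I P \<Longrightarrow> t (hd P) = 1 \<Longrightarrow> t (last P) = 1 \<Longrightarrow> \<exists>Q. alternating t Q \<and> homotopic X I P Q"
proof (induction "length P" arbitrary: P rule: less_induct)
  case less
  then obtain x rest where P: "P = x # rest" by (cases P) (auto simp: is_path_iff)
  show ?case
  proof (cases rest)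
    case Nil
    then show ?thesis using less(3) P homotopic_refl[OF less(2)] by (intro exI[of _ "[x]"]) simp
  next
    case (Cons y rest')
    have xy: "I x y" and path: "is_path X I (y # rest')" using less(2) P Cons by auto
    show ?thesis
    proof (cases "t y = 1")
      case True
      then have "y = x" using xy less(3) P incident_same_type by (metis list.sel(1))
      then have "homotopic X I P (y # rest')"
        using homotopic_cong[OF homotopic_stutter, of x "[]" rest'] less(2) P Cons incident_in_X[OF xy]
        by simp
      moreover obtain Q where "alternating t Q" "homotopic X I (y # rest') Q"
        using less(1)[OF _ path] P Cons True less(4) by fastforce
      ultimately show ?thesis using homotopic_trans by blast
    next
      case False
      then obtain z rest'' where rest': "rest' = z # rest''"
        using less(4) P Cons by (cases rest') auto
      have yz: "I y z" and path_z: "is_path X I (z # rest'')" using path rest' by auto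
      obtain r where r: "t r = 1" "I y r" "I z r"
        using exists_incident_of_type[OF yz, of 1] by auto
      have "homotopic X I ([x] @ [y, z] @ rest'') ([x] @ [y, r, z] @ rest'')"
        using homotopic_cong[OF homotopic_sym[OF homotopic_flag[of y r z]], of "[x]" rest'']
          r yz less(2) P Cons rest' by (simp add: incident_commute)
      then have detour: "homotopic X I P ([x, y, r] @ tl (r # z # rest''))"
        using P Cons rest' by simp
      obtain Q1 where Q1: "alternating t Q1" "homotopic X I [x, y, r] Q1"
        using three_element_path_alternating[OF xy r(2)] r(1) less(3) P by auto
      obtain Q2 where Q2: "alternating t Q2" "homotopic X I (r # z # rest'') Q2"
        using less(1)[of "r # z # rest''"] path_z r less(4) P Cons rest'
        by (auto simp: incident_commute)
      have "homotopic X I P (Q1 @ tl Q2)"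
        using detour homotopic_join[OF Q1(2) Q2(2)] homotopic_trans by fastforce
      then show ?thesis using alternating_join Q1(1) Q2(1) by blast
    qed
  qed
qed

text \<open>The key step: the middle line \<open>M\<close> lies in a plane \<open>\<pi>\<close>, and the quadrangle residues at
  \<open>b\<close> and \<open>c\<close> let us reroute \<open>b M c\<close> inside \<open>\<pi>\<close> so that each half of the path lies in a
  single plane, where it collapses.\<close>
lemma three_line_path_reduces:
  assumes P: "is_path X I [a, L, b, M, c, N, d]"
    and types: "t a = 1" "t L = 2" "t b = 1" "t M = 2" "t c = 1" "t N = 2" "t d = 1"
  shows "\<exists>R. alternating t R \<and> length R \<le> 5 \<and> homotopic X I [a, L, b, M, c, N, d] R"
proof -
  have inc: "I a L" "I L b" "I b M" "I M c" "I c N" "I N d" using P by auto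
  obtain \<pi> where \<pi>: "t \<pi> = 3" "I M \<pi>"
    using exists_incident_of_type[of M M 3] inc incident_in_X incident_refl by auto
  have b\<pi>: "I b \<pi>" and c\<pi>: "I c \<pi>"
    using point_line_plane_incident types \<pi> inc incident_commute by metis+
  obtain K \<sigma> where K: "t K = 2" "I b K" "I K \<pi>" "t \<sigma> = 3" "I L \<sigma>" "I K \<sigma>"
    using quadrangle_coplanar_line types \<pi>(1) inc(2) b\<pi> incident_commute by metis
  obtain K' \<tau> where K': "t K' = 2" "I c K'" "I K' \<pi>" "t \<tau> = 3" "I N \<tau>" "I K' \<tau>"
    using quadrangle_coplanar_line types \<pi>(1) inc(5) c\<pi> by metis
  obtain q where q: "t q = 1" "I q \<pi>" "I q K" "I q K'"
  proof (cases "K = K'")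
    case True
    then show ?thesis using that types(3) b\<pi> K(2) incident_commute by blast
  next
    case False
    then show ?thesis using that plane_lines_meet[OF \<pi>(1) K(1) K'(1) K(3) K'(3)] by blast
  qed
  have middle: "homotopic X I [b, M, c] [b, K, q, K', c]"
    using cone_paths_homotopic[of "[b, M, c]" "[b, K, q, K', c]" \<pi>] inc \<pi> b\<pi> c\<pi> K K' q
      incident_in_X by (auto simp: incident_commute)
  have reroute: "homotopic X I [a, L, b, M, c, N, d] ([a, L, b, K, q] @ tl [q, K', c, N, d])"
    using homotopic_cong[OF middle, of "[a, L]" "[N, d]"] P by simp
  have "q \<in> X" using q incident_in_X by blast
  then have path\<sigma>: "is_path X I [a, L, b, K, q]" and path\<tau>: "is_path X I [q, K', c, N, d]"
    using inc K K' q P by (simp_all add: incident_commute)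
  have "I \<sigma> a" "I \<sigma> b" "I \<sigma> q" "I \<tau> q" "I \<tau> c" "I \<tau> d"
    using point_line_plane_incident types inc K K' q incident_commute by metis+
  then obtain R1 R2 where
      R1: "alternating t R1" "length R1 \<le> 3" "homotopic X I [a, L, b, K, q] R1" and
      R2: "alternating t R2" "length R2 \<le> 3" "homotopic X I [q, K', c, N, d] R2"
    using plane_path_reduces[OF path\<sigma> K(4)] plane_path_reduces[OF path\<tau> K'(4)] K K' q types
    by (auto simp: incident_commute)
  have "homotopic X I [a, L, b, M, c, N, d] (R1 @ tl R2)"
    using reroute homotopic_join[OF R1(3) R2(3)] homotopic_trans by fastforce
  moreover have "alternating t (R1 @ tl R2)" "length (R1 @ tl R2) \<le> 5"
    using alternating_join R1 R2 by auto
  ultimately show ?thesis by blast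
qed

lemma alternating_path_reduces:
  "alternating t Q \<Longrightarrow> is_path X I Q \<Longrightarrow> \<exists>R. alternating t R \<and> length R \<le> 5 \<and> homotopic X I Q R"
proof (induction Q rule: induct_list012)
  case (2 p)
  then show ?case using homotopic_refl by fastforce
next
  case (3 a L rest)
  from 3(3) have types: "t a = 1" "t L = 2" and "alternating t rest" by simp_all
  moreover from this have "is_path X I rest" using 3(4) by (cases rest) auto
  ultimately obtain R where R: "alternating t R" "length R \<le> 5" "homotopic X I rest R"
    using 3(1) by blast
  have step: "homotopic X I (a # L # rest) (a # L # R)"
    using homotopic_cong[OF R(3), of "[a, L]" "[]"] 3(4) by simp
  show ?case
  proof (cases "length R \<le> 3")
    case True
    with R(1) step types show ?thesis by (intro exI[of _ "a # L # R"]) auto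
  next
    case False
    with R(1,2) obtain b M c N d where R5: "R = [b, M, c, N, d]"
      and "t b = 1" "t M = 2" "t c = 1" "t N = 2" "t d = 1"
      by (cases rule: alternating_le5_cases) auto
    moreover have "is_path X I [a, L, b, M, c, N, d]" using homotopic_ends[OF step] R5 by simp
    ultimately obtain R' where "alternating t R'" "length R' \<le> 5"
        "homotopic X I [a, L, b, M, c, N, d] R'"
      using three_line_path_reduces[of a L b M c N d] types by blast
    then show ?thesis using homotopic_trans[OF step[unfolded R5]] by blast
  qed
qed simp

lemma closed_short_alternating_primitive:
  assumes R: "alternating t R" "length R \<le> 5" and closed: "closed_path X I R"
  shows "\<exists>c. primitive_path X t I c \<and> homotopic X I R c"
  using R
proof (cases rule: alternating_le5_cases)
  case (1 p)
  then have "p \<in> X" using closed by (simp add: closed_path_def)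
  then obtain L where "t L = 2" "I p L"
    using exists_incident_of_type[of p p 2] incident_refl by auto
  then show ?thesis
    using homotopic_double_backtrack 1 homotopic_ends by (fastforce simp: primitive_path_def)
next
  case (2 p L q)
  then have "q = p" "I p L" using closed by (auto simp: closed_path_def)
  then have "homotopic X I R [p, L, p, L, p]"
    using 2 homotopic_backtrack homotopic_double_backtrack homotopic_trans by metis
  then show ?thesis using 2 homotopic_ends by (fastforce simp: primitive_path_def)
next
  case (3 p L q M s)
  then have "primitive_path X t I R" using closed by (auto simp: primitive_path_def closed_path_def)
  then show ?thesis using homotopic_refl primitive_path_def by blast
qed

end

theorem mainTheorem6:
  fixes X :: "'a set" and t :: "'a \<Rightarrow> nat" and I :: "'a \<Rightarrow> 'a \<Rightarrow> bool"
    and c :: "'a list"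
  assumes "C3_geometry X t I"
    and "closed_path X I c"
    and "t (hd c) = 1"
  shows "\<exists>c'. primitive_path X t I c' \<and> homotopic X I c c'"
proof -
  interpret C3 X t I using assms(1) by unfold_locales
  have c: "is_path X I c" "hd c = last c" using assms(2) by (auto simp: closed_path_def)
  obtain Q where Q: "alternating t Q" "homotopic X I c Q"
    using homotopic_alternating[OF c(1)] assms(3) c(2) by metis
  obtain R where R: "alternating t R" "length R \<le> 5" "homotopic X I Q R"
    using alternating_path_reduces Q homotopic_ends by blast
  have cR: "homotopic X I c R" using Q(2) R(3) by (rule homotopic_trans)
  then have "closed_path X I R" using c homotopic_ends by (metis closed_path_def)
  then show ?thesis
    using closed_short_alternating_primitive R(1,2) cR homotopic_trans by blast
qed

end
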